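(* Let $n\ge 1$, let $m=(m_1,\dots,m_n)\in\mathbb Z_+^n$, and let $c_\alpha\in\mathbb C$ for $\alpha\in\mathbb Z_+^n$ with $0\le\alpha\le m$ (put $c_\alpha=0$ for all other $\alpha$). Let $P(z)=\sum_{0\le\alpha\le m}c_\alpha z^\alpha$. Let $X_0=\{\tau\in\mathbb Z^n:\tau\ge 0,\ \tau\not\ge m\}$, let $\varphi:X_0\to\mathbb C$, and let $f:\mathbb Z_+^n\to\mathbb C$ satisfy $$\sum_{0\le\alpha\le m}c_\alpha f(x+\alpha)=0\quad (x\in\mathbb Z_+^n),\qquad f(x)=\varphi(x)\quad (x\in X_0).$$ Assume that the generating function $F(z)=\sum_{x\ge 0} f(x)/z^{x+I}$ converges (absolutely) in some neighborhood of infinity $\{|z_j|>R_j,\ j=1,\dots,n\}$. Then, in that neighborhood, the following identities hold: $$P(z)F(z)=\sum_{0\le\alpha\le m}c_\alpha\Big(\sum_{\tau\ge 0,\ \tau\not\ge\alpha}\frac{\varphi(\tau)}{z^{\tau-\alpha+I}}\Big);$$ $$P(z)F(z)=\sum_{\tau\in\mathbb Z^n,\ \tau\le m,\ \tau\not\le 0}\Big(\sum_{\alpha\ge 0,\ \tau\le\alpha\le m}c_\alpha\,\varphi(\alpha-\tau)\Big)z^{\tau-I};$$ $$P(z)F(z)=P(z)\sum_{\tau\ge0,\ \tau\not\ge m}\frac{\varphi(\tau)}{z^{\tau+I}}-\sum_{\tau\ge 0,\ \tau\not\ge m}\Big(\sum_{0\le\alpha\le\tau}c_\alpha z^\alpha\Big)\frac{\varphi(\tau)}{z^{\tau+I}};$$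 $$P(z)F(z)=\sum_{\tau\ge0,\ \tau\not\ge m}\Big(\sum_{\alpha\le m,\ \alpha\not\le\tau}c_\alpha z^\alpha\Big)\frac{\varphi(\tau)}{z^{\tau+I}}.$$
   Context: For $x,y\in\mathbb Z^n$, $x\le y$ means $x_k\le y_k$ for all $k$; $x\not\ge y$ means that $x\ge y$ fails (i.e. $x_k<y_k$ for some $k$), and similarly for $\not\le$. $\mathbb Z_+^n$ is the set of integer points with nonnegative coordinates, $I=(1,\dots,1)$, and $z^x=z_1^{x_1}\cdots z_n^{x_n}$. *)

theory Defs
  imports "HOL-Analysis.Analysis"
begin

text \<open>Integer points of Z^n are vectors \<open>int ^ 'n\<close> (dimension n = CARD('n) \<ge> 1);
  the order \<open>\<le>\<close> on vectors is the componentwise one from the library.\<close>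

definition onesv :: "int ^ 'n" where
  "onesv = (\<chi> i. 1)"

definition zpow :: "complex ^ 'n \<Rightarrow> int ^ 'n \<Rightarrow> complex" where
  "zpow z x = (\<Prod>i\<in>UNIV. (z $ i) powi (x $ i))"

end

theory Submission
  imports Defs
begin

text \<open>Multiplying \<open>F\<close> by \<open>z\<^sup>\<alpha>\<close> shifts the exponents by \<open>\<alpha>\<close>. The terms of \<open>z\<^sup>\<alpha> F\<close> with
  \<open>x \<ge> \<alpha>\<close> form, after the substitution \<open>x = y + \<alpha>\<close>, the generating function of \<open>f(\<cdot> + \<alpha>)\<close>;
  weighted with \<open>c\<^sub>\<alpha>\<close> and summed over \<open>\<alpha>\<close>, these add up to the generating function of
  \<open>\<Sum>\<^sub>\<alpha> c\<^sub>\<alpha> f(y + \<alpha>) = 0\<close>. What remains of \<open>P F\<close> are the finitely many series of boundary terms over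
  \<open>x \<ge> 0, x \<not>\<ge> \<alpha>\<close>, which for \<open>\<alpha> \<le> m\<close> lie in \<open>X\<^sub>0\<close>, where \<open>f = \<phi>\<close>. This is the first
  identity; the second is its reindexing \<open>\<tau> \<mapsto> \<alpha> - \<tau>\<close>, the fourth regroups the boundary terms as a
  single series over \<open>X\<^sub>0\<close>, and the third follows from the fourth by splitting \<open>P(z)\<close> into
  the monomials with \<open>\<alpha> \<le> \<tau>\<close> and the rest.\<close>

lemma finite_vec_box: "finite {x::int^'n. a \<le> x \<and> x \<le> b}"
proof -
  have "vec_nth ` {x::int^'n. a \<le> x \<and> x \<le> b} \<subseteq> PiE UNIV (\<lambda>i. {a$i..b$i})"
    by (auto simp: less_eq_vec_def)
  then have "finite (vec_nth ` {x::int^'n. a \<le> x \<and> x \<le> b})"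
    by (rule finite_subset) (intro finite_PiE, auto)
  then show ?thesis
    by (rule finite_imageD) (auto simp: inj_on_def vec_eq_iff)
qed

lemma sum_vec_box_split:
  fixes a :: "int^'n \<Rightarrow> 'b::comm_monoid_add"
  assumes "\<And>\<alpha>. \<not> (0 \<le> \<alpha> \<and> \<alpha> \<le> m) \<Longrightarrow> a \<alpha> = 0"
  shows "(\<Sum>\<alpha>\<in>{\<alpha>. 0 \<le> \<alpha> \<and> \<alpha> \<le> m}. a \<alpha>)
           = (\<Sum>\<alpha>\<in>{\<alpha>. 0 \<le> \<alpha> \<and> \<alpha> \<le> \<tau>}. a \<alpha>) + (\<Sum>\<alpha>\<in>{\<alpha>. 0 \<le> \<alpha> \<and> \<alpha> \<le> m \<and> \<not> \<alpha> \<le> \<tau>}. a \<alpha>)"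
proof -
  have fin: "finite {\<alpha>. 0 \<le> \<alpha> \<and> \<alpha> \<le> m \<and> P \<alpha>}" for P
    by (rule finite_subset[OF _ finite_vec_box]) auto
  have "(\<Sum>\<alpha>\<in>{\<alpha>. 0 \<le> \<alpha> \<and> \<alpha> \<le> m}. a \<alpha>)
          = (\<Sum>\<alpha>\<in>{\<alpha>. 0 \<le> \<alpha> \<and> \<alpha> \<le> m \<and> \<alpha> \<le> \<tau>} \<union> {\<alpha>. 0 \<le> \<alpha> \<and> \<alpha> \<le> m \<and> \<not> \<alpha> \<le> \<tau>}. a \<alpha>)"
    by (rule arg_cong[where f = "sum a"]) auto
  also have "\<dots> = (\<Sum>\<alpha>\<in>{\<alpha>. 0 \<le> \<alpha> \<and> \<alpha> \<le> m \<and> \<alpha> \<le> \<tau>}. a \<alpha>) + (\<Sum>\<alpha>\<in>{\<alpha>. 0 \<le> \<alpha> \<and> \<alpha> \<le> m \<and> \<not> \<alpha> \<le> \<tau>}. a \<alpha>)"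
    by (rule sum.union_disjoint[OF fin fin]) auto
  also have "(\<Sum>\<alpha>\<in>{\<alpha>. 0 \<le> \<alpha> \<and> \<alpha> \<le> m \<and> \<alpha> \<le> \<tau>}. a \<alpha>) = (\<Sum>\<alpha>\<in>{\<alpha>. 0 \<le> \<alpha> \<and> \<alpha> \<le> \<tau>}. a \<alpha>)"
    by (rule sum.mono_neutral_left) (use finite_vec_box assms in auto)
  finally show ?thesis .
qed

lemma zpow_nonzero: "\<forall>i. z $ i \<noteq> 0 \<Longrightarrow> zpow z x \<noteq> 0"
  unfolding zpow_def by simp

lemma zpow_add: "\<forall>i. z $ i \<noteq> 0 \<Longrightarrow> zpow z (x + y) = zpow z x * zpow z y"
  unfolding zpow_def by (simp add: power_int_add prod.distrib)

lemma zpow_uminus: "zpow z (- x) = inverse (zpow z x)"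
  unfolding zpow_def using prod_inversef[of "\<lambda>i. z $ i powi x $ i" UNIV]
  by (simp add: power_int_minus o_def)

lemma divide_zpow_shift:
  assumes "\<forall>i. z $ i \<noteq> 0"
  shows "w / zpow z (x - \<alpha> + onesv) = zpow z \<alpha> * (w / zpow z (x + onesv))"
proof -
  have "zpow z (x - \<alpha> + onesv) = zpow z ((x + onesv) + - \<alpha>)"
    by (rule arg_cong[where f = "zpow z"]) simp
  also have "\<dots> = zpow z (x + onesv) * inverse (zpow z \<alpha>)"
    by (simp only: zpow_add[OF assms] zpow_uminus)
  finally have "zpow z (x - \<alpha> + onesv) = zpow z (x + onesv) * inverse (zpow z \<alpha>)" .
  then show ?thesis
    using zpow_nonzero[OF assms] by (simp add: field_simps)
qed

lemma has_sum_diff: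
  fixes f g :: "'a \<Rightarrow> 'b::topological_ab_group_add"
  assumes "(f has_sum a) A" "(g has_sum b) A"
  shows "((\<lambda>x. f x - g x) has_sum (a - b)) A"
proof -
  have "((\<lambda>x. - g x) has_sum - b) A"
    using assms(2) by (simp add: has_sum_uminus)
  from has_sum_add[OF assms(1) this] show ?thesis
    by simp
qed

lemma has_sum_sum:
  fixes g :: "'i \<Rightarrow> 'a \<Rightarrow> 'b::topological_comm_monoid_add"
  assumes "finite I" "\<And>i. i \<in> I \<Longrightarrow> (g i has_sum s i) A"
  shows "((\<lambda>x. \<Sum>i\<in>I. g i x) has_sum (\<Sum>i\<in>I. s i)) A"
  using assms by (induction I rule: finite_induct) (auto intro: has_sum_add)

lemma has_sum_sum_on_subsets:
  fixes g :: "'i \<Rightarrow> 'a \<Rightarrow> 'b::topological_comm_monoid_add"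
  assumes "finite I" "\<And>i. i \<in> I \<Longrightarrow> (g i has_sum s i) (B i)" "\<And>i. i \<in> I \<Longrightarrow> B i \<subseteq> A"
  shows "((\<lambda>x. \<Sum>i\<in>{i\<in>I. x \<in> B i}. g i x) has_sum (\<Sum>i\<in>I. s i)) A"
proof -
  have "((\<lambda>x. if x \<in> B i then g i x else 0) has_sum s i) A" if "i \<in> I" for i
    using assms(2)[OF that] by (subst has_sum_cong_neutral[where T = "B i"]) (use assms(3)[OF that] in auto)
  then have "((\<lambda>x. \<Sum>i\<in>I. if x \<in> B i then g i x else 0) has_sum (\<Sum>i\<in>I. s i)) A"
    using assms(1) by (rule has_sum_sum[rotated])
  then show ?thesis
    by (simp add: sum.inter_filter[OF assms(1)])
qed

lemma has_sum_complementary_weights: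
  fixes q :: "'a \<Rightarrow> 'b::{ring, topological_ab_group_add, topological_semigroup_mult}"
  assumes "(q has_sum Q) X" "((\<lambda>x. v x * q x) has_sum V) X" "\<And>x. x \<in> X \<Longrightarrow> u x + v x = p"
  shows "((\<lambda>x. u x * q x) has_sum (p * Q - V)) X"
proof -
  have "((\<lambda>x. p * q x - v x * q x) has_sum (p * Q - V)) X"
    using assms(1,2) by (intro has_sum_diff has_sum_cmult_right)
  then show ?thesis
    by (rule has_sum_cong[THEN iffD1, rotated]) (simp flip: assms(3) add: algebra_simps)
qed

lemma has_sum_shift:
  fixes g :: "'a::ordered_ab_group_add ^ 'n \<Rightarrow> 'b::topological_comm_monoid_add"
  shows "((\<lambda>y. g (y + a)) has_sum s) {y. 0 \<le> y} \<longleftrightarrow> (g has_sum s) {x. a \<le> x}"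
  by (rule has_sum_reindex_bij_witness[where j = "\<lambda>y. y + a" and i = "\<lambda>x. x - a"])
     (auto simp: less_eq_vec_def)

lemma summable_on_boundary_terms:
  assumes "\<forall>i. z $ i \<noteq> 0" and "(\<lambda>x. f x / zpow z (x + onesv)) summable_on {x. 0 \<le> x}"
  shows "(\<lambda>x. f x / zpow z (x - \<alpha> + onesv)) summable_on {x. 0 \<le> x \<and> \<not> \<alpha> \<le> x}"
proof -
  have "(\<lambda>x. f x / zpow z (x - \<alpha> + onesv)) summable_on {x. 0 \<le> x}"
    using summable_on_cmult_right[OF assms(2), of "zpow z \<alpha>"]
    by (simp add: divide_zpow_shift[OF assms(1)])
  then show ?thesis
    by (rule summable_on_subset_banach) auto
qed

lemma boundary_terms_has_sum:
  assumes "\<forall>i. z $ i \<noteq> 0" and "(\<lambda>x. f x / zpow z (x + onesv)) summable_on {x. 0 \<le> x}"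
    and boundary: "\<And>x. 0 \<le> x \<Longrightarrow> \<not> m \<le> x \<Longrightarrow> f x = \<phi> x" and "\<alpha> \<le> m"
  shows "((\<lambda>\<tau>. \<phi> \<tau> / zpow z (\<tau> - \<alpha> + onesv)) has_sum
           (\<Sum>\<^sub>\<infinity>x\<in>{x. 0 \<le> x \<and> \<not> \<alpha> \<le> x}. f x / zpow z (x - \<alpha> + onesv))) {\<tau>. 0 \<le> \<tau> \<and> \<not> \<alpha> \<le> \<tau>}"
proof -
  have "f \<tau> = \<phi> \<tau>" if "0 \<le> \<tau>" "\<not> \<alpha> \<le> \<tau>" for \<tau>
    using boundary that \<open>\<alpha> \<le> m\<close> by (meson order_trans)
  then show ?thesis
    using summable_on_boundary_terms[OF assms(1,2), where \<alpha> = \<alpha>]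
    by (subst has_sum_cong[where g = "\<lambda>x. f x / zpow z (x - \<alpha> + onesv)"]) auto
qed

lemma shifted_genfun_has_sum:
  assumes z: "\<forall>i. z $ i \<noteq> 0"
    and F: "((\<lambda>x. f x / zpow z (x + onesv)) has_sum F) {x. 0 \<le> x}"
    and "0 \<le> \<alpha>"
  shows "((\<lambda>y. f (y + \<alpha>) / zpow z (y + onesv)) has_sum
           (zpow z \<alpha> * F - (\<Sum>\<^sub>\<infinity>x\<in>{x. 0 \<le> x \<and> \<not> \<alpha> \<le> x}. f x / zpow z (x - \<alpha> + onesv))))
         {y. 0 \<le> y}"
proof -
  let ?h = "\<lambda>x. f x / zpow z (x - \<alpha> + onesv)"
  have "(?h has_sum zpow z \<alpha> * F) {x. 0 \<le> x}"
    using has_sum_cmult_right[OF F] by (simp add: divide_zpow_shift[OF z])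
  moreover have "(?h has_sum (\<Sum>\<^sub>\<infinity>x\<in>{x. 0 \<le> x \<and> \<not> \<alpha> \<le> x}. ?h x)) {x. 0 \<le> x \<and> \<not> \<alpha> \<le> x}"
    using summable_on_boundary_terms[OF z has_sum_imp_summable[OF F]] by simp
  ultimately have "(?h has_sum (zpow z \<alpha> * F - (\<Sum>\<^sub>\<infinity>x\<in>{x. 0 \<le> x \<and> \<not> \<alpha> \<le> x}. ?h x)))
                     ({x. 0 \<le> x} - {x. 0 \<le> x \<and> \<not> \<alpha> \<le> x})"
    by (rule has_sum_Diff) auto
  also have "{x. 0 \<le> x} - {x. 0 \<le> x \<and> \<not> \<alpha> \<le> x} = {x. \<alpha> \<le> x}"
    using \<open>0 \<le> \<alpha>\<close> order_trans by auto
  finally show ?thesis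
    using has_sum_shift[of "\<lambda>x. f x / zpow z (x - \<alpha> + onesv)" \<alpha>] by simp
qed

lemma charpoly_times_genfun:
  assumes z: "\<forall>i. z $ i \<noteq> 0"
    and F: "((\<lambda>x. f x / zpow z (x + onesv)) has_sum F) {x. 0 \<le> x}"
    and A: "finite A" "\<And>\<alpha>. \<alpha> \<in> A \<Longrightarrow> 0 \<le> \<alpha>"
    and recurrence: "\<And>x. 0 \<le> x \<Longrightarrow> (\<Sum>\<alpha>\<in>A. c \<alpha> * f (x + \<alpha>)) = 0"
  shows "(\<Sum>\<alpha>\<in>A. c \<alpha> * zpow z \<alpha>) * F
           = (\<Sum>\<alpha>\<in>A. c \<alpha> * (\<Sum>\<^sub>\<infinity>x\<in>{x. 0 \<le> x \<and> \<not> \<alpha> \<le> x}. f x / zpow z (x - \<alpha> + onesv)))"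
proof -
  define T where "T \<alpha> = (\<Sum>\<^sub>\<infinity>x\<in>{x. 0 \<le> x \<and> \<not> \<alpha> \<le> x}. f x / zpow z (x - \<alpha> + onesv))" for \<alpha>
  have "((\<lambda>y. \<Sum>\<alpha>\<in>A. c \<alpha> * (f (y + \<alpha>) / zpow z (y + onesv)))
          has_sum (\<Sum>\<alpha>\<in>A. c \<alpha> * (zpow z \<alpha> * F - T \<alpha>))) {y. 0 \<le> y}"
    unfolding T_def using A
    by (intro has_sum_sum has_sum_cmult_right shifted_genfun_has_sum[OF z F]) auto
  moreover have "((\<lambda>y. \<Sum>\<alpha>\<in>A. c \<alpha> * (f (y + \<alpha>) / zpow z (y + onesv))) has_sum 0) {y. 0 \<le> y}"
    using recurrence by (intro has_sum_0) (simp add: sum_divide_distrib[symmetric])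
  ultimately have "(\<Sum>\<alpha>\<in>A. c \<alpha> * (zpow z \<alpha> * F - T \<alpha>)) = 0"
    by (rule has_sum_unique)
  then show ?thesis
    unfolding T_def[symmetric]
    by (simp add: right_diff_distrib sum_subtractf sum_distrib_right mult.assoc)
qed

lemma reflected_boundary_terms_has_sum:
  fixes m :: "int^'n"
  assumes boundary_terms: "\<And>\<alpha>. 0 \<le> \<alpha> \<Longrightarrow> \<alpha> \<le> m \<Longrightarrow>
                    ((\<lambda>\<tau>. \<phi> \<tau> / zpow z (\<tau> - \<alpha> + onesv)) has_sum T \<alpha>) {\<tau>. 0 \<le> \<tau> \<and> \<not> \<alpha> \<le> \<tau>}"
  shows "((\<lambda>\<sigma>. (\<Sum>\<alpha>\<in>{\<alpha>. 0 \<le> \<alpha> \<and> \<sigma> \<le> \<alpha> \<and> \<alpha> \<le> m}. c \<alpha> * \<phi> (\<alpha> - \<sigma>)) * zpow z (\<sigma> - onesv))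
           has_sum (\<Sum>\<alpha>\<in>{\<alpha>. 0 \<le> \<alpha> \<and> \<alpha> \<le> m}. c \<alpha> * T \<alpha>)) {\<sigma>. \<sigma> \<le> m \<and> \<not> \<sigma> \<le> 0}"
proof -
  have reflect: "((\<lambda>\<sigma>. \<phi> (\<alpha> - \<sigma>) * zpow z (\<sigma> - onesv)) has_sum T \<alpha>) {\<sigma>. \<sigma> \<le> \<alpha> \<and> \<not> \<sigma> \<le> 0}"
    if "0 \<le> \<alpha>" "\<alpha> \<le> m" for \<alpha>
  proof -
    have "zpow z (\<alpha> - \<sigma> - \<alpha> + onesv) = inverse (zpow z (\<sigma> - onesv))" for \<sigma>
      using zpow_uminus[of z "\<sigma> - onesv"] by simp
    then show ?thesis
      using boundary_terms[OF that]
      by (subst has_sum_reindex_bij_witness[where j = "\<lambda>\<sigma>. \<alpha> - \<sigma>" and i = "\<lambda>\<tau>. \<alpha> - \<tau>"])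
         (auto simp: divide_inverse less_eq_vec_def)
  qed
  have "((\<lambda>\<sigma>. \<Sum>\<alpha>\<in>{\<alpha>\<in>{\<alpha>. 0 \<le> \<alpha> \<and> \<alpha> \<le> m}. \<sigma> \<in> {\<sigma>. \<sigma> \<le> \<alpha> \<and> \<not> \<sigma> \<le> 0}}. c \<alpha> * (\<phi> (\<alpha> - \<sigma>) * zpow z (\<sigma> - onesv)))
          has_sum (\<Sum>\<alpha>\<in>{\<alpha>. 0 \<le> \<alpha> \<and> \<alpha> \<le> m}. c \<alpha> * T \<alpha>)) {\<sigma>. \<sigma> \<le> m \<and> \<not> \<sigma> \<le> 0}"
    by (intro has_sum_sum_on_subsets has_sum_cmult_right reflect finite_vec_box)
       (auto intro: order_trans)
  then show ?thesis
    by (rule has_sum_cong[THEN iffD1, rotated]) (auto simp: sum_distrib_right mult.assoc intro!: sum.cong)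
qed

lemma regrouped_boundary_terms_has_sum:
  fixes m :: "int^'n"
  assumes z: "\<forall>i. z $ i \<noteq> 0"
    and boundary_terms: "\<And>\<alpha>. 0 \<le> \<alpha> \<Longrightarrow> \<alpha> \<le> m \<Longrightarrow>
                  ((\<lambda>\<tau>. \<phi> \<tau> / zpow z (\<tau> - \<alpha> + onesv)) has_sum T \<alpha>) {\<tau>. 0 \<le> \<tau> \<and> \<not> \<alpha> \<le> \<tau>}"
  shows "((\<lambda>\<tau>. (\<Sum>\<alpha>\<in>{\<alpha>. 0 \<le> \<alpha> \<and> \<alpha> \<le> m \<and> \<not> \<alpha> \<le> \<tau>}. c \<alpha> * zpow z \<alpha>) * \<phi> \<tau> / zpow z (\<tau> + onesv))
           has_sum (\<Sum>\<alpha>\<in>{\<alpha>. 0 \<le> \<alpha> \<and> \<alpha> \<le> m}. c \<alpha> * T \<alpha>)) {\<tau>. 0 \<le> \<tau> \<and> \<not> m \<le> \<tau>}"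
proof -
  have "((\<lambda>\<tau>. \<Sum>\<alpha>\<in>{\<alpha>\<in>{\<alpha>. 0 \<le> \<alpha> \<and> \<alpha> \<le> m}. \<tau> \<in> {\<tau>. 0 \<le> \<tau> \<and> \<not> \<alpha> \<le> \<tau>}}. c \<alpha> * (\<phi> \<tau> / zpow z (\<tau> - \<alpha> + onesv)))
          has_sum (\<Sum>\<alpha>\<in>{\<alpha>. 0 \<le> \<alpha> \<and> \<alpha> \<le> m}. c \<alpha> * T \<alpha>)) {\<tau>. 0 \<le> \<tau> \<and> \<not> m \<le> \<tau>}"
    by (intro has_sum_sum_on_subsets has_sum_cmult_right boundary_terms finite_vec_box)
       (auto intro: order_trans)
  then show ?thesis
    by (rule has_sum_cong[THEN iffD1, rotated])
       (auto simp: divide_zpow_shift[OF z] sum_distrib_right sum_divide_distrib mult.assoc)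
qed

theorem theorem1:
  fixes m :: "int ^ 'n"
    and c :: "int ^ 'n \<Rightarrow> complex"
    and \<phi> :: "int ^ 'n \<Rightarrow> complex"
    and f :: "int ^ 'n \<Rightarrow> complex"
    and R :: "real ^ 'n"
    and z :: "complex ^ 'n"
  assumes m_nonneg: "0 \<le> m"
    and c_zero: "\<And>\<alpha>. \<not> (0 \<le> \<alpha> \<and> \<alpha> \<le> m) \<Longrightarrow> c \<alpha> = 0"
    and recurrence: "\<And>x. 0 \<le> x \<Longrightarrow> (\<Sum>\<alpha>\<in>{\<alpha>. 0 \<le> \<alpha> \<and> \<alpha> \<le> m}. c \<alpha> * f (x + \<alpha>)) = 0"
    and boundary: "\<And>x. 0 \<le> x \<Longrightarrow> \<not> m \<le> x \<Longrightarrow> f x = \<phi> x"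
    and R_nonneg: "\<And>j. 0 \<le> R $ j"
    and conv: "\<And>w. (\<forall>j. norm (w $ j) > R $ j) \<Longrightarrow>
                 (\<lambda>x. norm (f x / zpow w (x + onesv))) summable_on {x. 0 \<le> x}"
    and z_in: "\<forall>j. norm (z $ j) > R $ j"
  defines "P \<equiv> (\<Sum>\<alpha>\<in>{\<alpha>. 0 \<le> \<alpha> \<and> \<alpha> \<le> m}. c \<alpha> * zpow z \<alpha>)"
    and "F \<equiv> (\<Sum>\<^sub>\<infinity>x\<in>{x. 0 \<le> x}. f x / zpow z (x + onesv))"
    and "X0 \<equiv> {\<tau>. 0 \<le> \<tau> \<and> \<not> m \<le> \<tau>}"
  shows
    "((\<forall>\<alpha>. 0 \<le> \<alpha> \<and> \<alpha> \<le> m \<longrightarrow> (\<lambda>\<tau>. \<phi> \<tau> / zpow z (\<tau> - \<alpha> + onesv)) summable_on {\<tau>. 0 \<le> \<tau> \<and> \<not> \<alpha> \<le> \<tau>})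
     \<and> P * F = (\<Sum>\<alpha>\<in>{\<alpha>. 0 \<le> \<alpha> \<and> \<alpha> \<le> m}.
                 c \<alpha> * (\<Sum>\<^sub>\<infinity>\<tau>\<in>{\<tau>. 0 \<le> \<tau> \<and> \<not> \<alpha> \<le> \<tau>}. \<phi> \<tau> / zpow z (\<tau> - \<alpha> + onesv))))
     \<and> (((\<lambda>\<tau>. (\<Sum>\<alpha>\<in>{\<alpha>. 0 \<le> \<alpha> \<and> \<tau> \<le> \<alpha> \<and> \<alpha> \<le> m}. c \<alpha> * \<phi> (\<alpha> - \<tau>)) * zpow z (\<tau> - onesv))
        has_sum (P * F)) {\<tau>. \<tau> \<le> m \<and> \<not> \<tau> \<le> 0})
     \<and> ((\<lambda>\<tau>. \<phi> \<tau> / zpow z (\<tau> + onesv)) summable_on X0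
     \<and> (\<lambda>\<tau>. (\<Sum>\<alpha>\<in>{\<alpha>. 0 \<le> \<alpha> \<and> \<alpha> \<le> \<tau>}. c \<alpha> * zpow z \<alpha>) * \<phi> \<tau> / zpow z (\<tau> + onesv)) summable_on X0
     \<and> P * F = P * (\<Sum>\<^sub>\<infinity>\<tau>\<in>X0. \<phi> \<tau> / zpow z (\<tau> + onesv))
               - (\<Sum>\<^sub>\<infinity>\<tau>\<in>X0. (\<Sum>\<alpha>\<in>{\<alpha>. 0 \<le> \<alpha> \<and> \<alpha> \<le> \<tau>}. c \<alpha> * zpow z \<alpha>) * \<phi> \<tau> / zpow z (\<tau> + onesv)))
     \<and> (((\<lambda>\<tau>. (\<Sum>\<alpha>\<in>{\<alpha>. 0 \<le> \<alpha> \<and> \<alpha> \<le> m \<and> \<not> \<alpha> \<le> \<tau>}. c \<alpha> * zpow z \<alpha>) * \<phi> \<tau> / zpow z (\<tau> + onesv))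
        has_sum (P * F)) X0)"
proof -
  let ?A = "{\<alpha>. 0 \<le> \<alpha> \<and> \<alpha> \<le> m}"
  let ?q = "\<lambda>\<tau>. \<phi> \<tau> / zpow z (\<tau> + onesv)"
  have z: "\<forall>j. z $ j \<noteq> 0"
    using z_in R_nonneg by (metis norm_zero not_le)
  have summable: "(\<lambda>x. f x / zpow z (x + onesv)) summable_on {x. 0 \<le> x}"
    using conv[OF z_in] by (rule abs_summable_summable)
  define T where "T \<alpha> = (\<Sum>\<^sub>\<infinity>x\<in>{x. 0 \<le> x \<and> \<not> \<alpha> \<le> x}. f x / zpow z (x - \<alpha> + onesv))" for \<alpha>
  have boundary_terms: "((\<lambda>\<tau>. \<phi> \<tau> / zpow z (\<tau> - \<alpha> + onesv)) has_sum T \<alpha>) {\<tau>. 0 \<le> \<tau> \<and> \<not> \<alpha> \<le> \<tau>}"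
    if "0 \<le> \<alpha>" "\<alpha> \<le> m" for \<alpha>
    unfolding T_def using z summable boundary that(2) by (rule boundary_terms_has_sum)
  have PF: "P * F = (\<Sum>\<alpha>\<in>?A. c \<alpha> * T \<alpha>)"
    unfolding P_def F_def T_def using recurrence summable
    by (intro charpoly_times_genfun[OF z _ finite_vec_box]) auto
  have first: "P * F = (\<Sum>\<alpha>\<in>?A. c \<alpha> * (\<Sum>\<^sub>\<infinity>\<tau>\<in>{\<tau>. 0 \<le> \<tau> \<and> \<not> \<alpha> \<le> \<tau>}. \<phi> \<tau> / zpow z (\<tau> - \<alpha> + onesv)))"
    unfolding PF by (intro sum.cong refl) (simp add: infsumI[OF boundary_terms])
  have second: "((\<lambda>\<sigma>. (\<Sum>\<alpha>\<in>{\<alpha>. 0 \<le> \<alpha> \<and> \<sigma> \<le> \<alpha> \<and> \<alpha> \<le> m}. c \<alpha> * \<phi> (\<alpha> - \<sigma>)) * zpow z (\<sigma> - onesv))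
                  has_sum (P * F)) {\<sigma>. \<sigma> \<le> m \<and> \<not> \<sigma> \<le> 0}"
    unfolding PF by (rule reflected_boundary_terms_has_sum[OF boundary_terms])
  let ?below = "\<lambda>\<tau>. \<Sum>\<alpha>\<in>{\<alpha>. 0 \<le> \<alpha> \<and> \<alpha> \<le> \<tau>}. c \<alpha> * zpow z \<alpha>"
  let ?above = "\<lambda>\<tau>. \<Sum>\<alpha>\<in>{\<alpha>. 0 \<le> \<alpha> \<and> \<alpha> \<le> m \<and> \<not> \<alpha> \<le> \<tau>}. c \<alpha> * zpow z \<alpha>"
  have fourth: "((\<lambda>\<tau>. ?above \<tau> * \<phi> \<tau> / zpow z (\<tau> + onesv)) has_sum (P * F)) X0"
    unfolding PF X0_def by (rule regrouped_boundary_terms_has_sum[OF z boundary_terms])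
  have "(\<lambda>x. f x / zpow z (x + onesv)) summable_on X0"
    by (rule summable_on_subset_banach[OF summable]) (auto simp: X0_def)
  then have q_summable: "?q summable_on X0"
    by (subst summable_on_cong[where g = "\<lambda>x. f x / zpow z (x + onesv)"]) (auto simp: X0_def boundary)
  have split: "?below \<tau> + ?above \<tau> = P" for \<tau>
    unfolding P_def by (rule sum_vec_box_split[symmetric]) (simp add: c_zero)
  have third: "((\<lambda>\<tau>. ?below \<tau> * \<phi> \<tau> / zpow z (\<tau> + onesv)) has_sum (P * infsum ?q X0 - P * F)) X0"
    using has_sum_complementary_weights[where q = ?q and u = ?below and v = ?above and p = P]
      q_summable fourth split
    by simp
  show ?thesis
    using has_sum_imp_summable[OF boundary_terms] first second q_summable
      has_sum_imp_summable[OF third] infsumI[OF third] fourth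
    by auto
qed

end
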